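(* Let $A>0$, $\phi>0$, $0<\gamma<1$, and $\alpha,\beta>0$ with $\alpha+\beta<1$. For $k,N>0$ define $n^*(k,N)=\frac{1-\alpha}{4\phi kN^{\gamma}}$ and $e^*(k,N)=\frac{2\alpha}{1-\alpha}\phi k^{2}N^{\gamma}$, and the map $F_C(k,N)=\big(A\,e^*(k,N)^{\alpha}k^{\beta},\ n^*(k,N)N\big)$. Let $(\bar k,\bar N)$ be the unique fixed point of $F_C$ with $\bar k,\bar N>0$. Write $\bar e=e^*(\bar k,\bar N)$ and let $$E_k=\frac{\partial e^*}{\partial k}(\bar k,\bar N)=\frac{4\alpha\phi}{1-\alpha}\bar k\bar N^{\gamma},\quad E_N=\frac{\partial e^*}{\partial N}(\bar k,\bar N)=\frac{2\alpha\gamma\phi}{1-\alpha}\bar k^{2}\bar N^{\gamma-1},$$ $$D_k=\frac{\partial n^*}{\partial k}(\bar k,\bar N)=-\frac{1-\alpha}{4\phi\bar k^{2}\bar N^{\gamma}},\quad D_N=\frac{\partial n^*}{\partial N}(\bar k,\bar N)=-\frac{\gamma(1-\alpha)}{4\phi\bar k\bar N^{\gamma+1}}.$$ Suppose $$1-\frac{\alpha\bar e^{\alpha-1}E_N\bar k^{\beta}D_k\bar N}{\alpha\bar e^{\alpha-1}E_k\bar k^{\beta}+\frac{\beta}{A}}-\frac{1}{A\alpha\bar e^{\alpha-1}E_k\bar k^{\beta}+\beta}<-D_N\bar N<1-\frac{A\alpha\bar e^{\alpha-1}E_N\bar k^{\beta}D_k\bar N}{1+A\alpha\bar e^{\alpha-1}E_k\bar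 k^{\beta}+\beta}$$ and $$A\alpha\bar e^{\alpha-1}E_k\bar k^{\beta}+\beta>1.$$ Then $(\bar k,\bar N)$ is locally asymptotically stable, i.e. both eigenvalues of the Jacobian matrix of $F_C$ at $(\bar k,\bar N)$ have modulus strictly less than $1$.
   Context: Overlapping-generations model with human capital $k_t$ and adult population $N_t$, in the case where parental childcare times are perfect complements; $n^*$ and $e^*$ are the household's optimal fertility and education spending and the dynamics are $(k_{t+1},N_{t+1})=F_C(k_t,N_t)$. The fixed point is $\bar k=(A^{1/\alpha}\alpha/2)^{\alpha/(1-\beta-\alpha)}$, $\bar N=\left(\frac{1-\alpha}{4\phi\bar k}\right)^{1/\gamma}$. *)

theory Defs
  imports "HOL-Analysis.Analysis"
begin

definition nstar :: "real \<Rightarrow> real \<Rightarrow> real \<Rightarrow> real \<Rightarrow> real \<Rightarrow> real" where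
  "nstar \<alpha> \<phi> \<gamma> k N = (1 - \<alpha>) / (4 * \<phi> * k * N powr \<gamma>)"

definition estar :: "real \<Rightarrow> real \<Rightarrow> real \<Rightarrow> real \<Rightarrow> real \<Rightarrow> real" where
  "estar \<alpha> \<phi> \<gamma> k N = (2 * \<alpha> / (1 - \<alpha>)) * \<phi> * k^2 * N powr \<gamma>"

definition FC_k :: "real \<Rightarrow> real \<Rightarrow> real \<Rightarrow> real \<Rightarrow> real \<Rightarrow> real \<Rightarrow> real \<Rightarrow> real" where
  "FC_k A \<alpha> \<beta> \<phi> \<gamma> k N = A * (estar \<alpha> \<phi> \<gamma> k N) powr \<alpha> * k powr \<beta>"

definition FC_N :: "real \<Rightarrow> real \<Rightarrow> real \<Rightarrow> real \<Rightarrow> real \<Rightarrow> real" where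
  "FC_N \<alpha> \<phi> \<gamma> k N = nstar \<alpha> \<phi> \<gamma> k N * N"

definition FC :: "real \<Rightarrow> real \<Rightarrow> real \<Rightarrow> real \<Rightarrow> real \<Rightarrow> real \<times> real \<Rightarrow> real \<times> real" where
  "FC A \<alpha> \<beta> \<phi> \<gamma> = (\<lambda>(k, N). (FC_k A \<alpha> \<beta> \<phi> \<gamma> k N, FC_N \<alpha> \<phi> \<gamma> k N))"

definition jac_FC :: "real \<Rightarrow> real \<Rightarrow> real \<Rightarrow> real \<Rightarrow> real \<Rightarrow> real \<Rightarrow> real \<Rightarrow> real^2^2" where
  "jac_FC A \<alpha> \<beta> \<phi> \<gamma> k N =
     vector [vector [deriv (\<lambda>x. FC_k A \<alpha> \<beta> \<phi> \<gamma> x N) k, deriv (\<lambda>y. FC_k A \<alpha> \<beta> \<phi> \<gamma> k y) N],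
             vector [deriv (\<lambda>x. FC_N \<alpha> \<phi> \<gamma> x N) k,     deriv (\<lambda>y. FC_N \<alpha> \<phi> \<gamma> k y) N]]"

definition eigenvalue2 :: "real^2^2 \<Rightarrow> complex \<Rightarrow> bool" where
  "eigenvalue2 J z \<longleftrightarrow>
     (of_real (J$1$1) - z) * (of_real (J$2$2) - z) - of_real (J$1$2) * of_real (J$2$1) = 0"

end

theory Submission
  imports Defs
begin

text \<open>Both e* and n* are products of powers of k and N, so every partial derivative of F_C is an
  elasticity times the value divided by the variable.  At a fixed point, where F_C(k, N) = (k, N),
  the Jacobian therefore only involves the exponents:
  J = [[2\<alpha> + \<beta>, \<alpha>\<gamma> k/N], [-N/k, 1 - \<gamma>]], with trace T = 2\<alpha> + \<beta> + 1 - \<gamma> and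
  determinant D = (2\<alpha> + \<beta>)(1 - \<gamma>) + \<alpha>\<gamma>.  By the Schur-Cohn (Jury) criterion both eigenvalues lie
  in the open unit disc iff D < 1 and |T| < 1 + D.  The second condition holds for all admissible
  parameters, since 1 + D - T = \<gamma>(1 - \<alpha> - \<beta>), and D < 1 is the left inequality of cond1 once the
  paper's partial derivatives are evaluated at the fixed point.\<close>

lemma estar_pos:
  assumes "0 < \<alpha>" "\<alpha> < 1" "0 < \<phi>" "k \<noteq> 0" "0 < N"
  shows "0 < estar \<alpha> \<phi> \<gamma> k N"
  using assms unfolding estar_def by simp

lemma has_real_derivative_estar_k:
  assumes "k \<noteq> 0"
  shows "((\<lambda>x. estar \<alpha> \<phi> \<gamma> x N) has_real_derivative 2 * estar \<alpha> \<phi> \<gamma> k N / k) (at k)"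
proof -
  have "((\<lambda>x. 2 * \<alpha> / (1 - \<alpha>) * \<phi> * x^2 * N powr \<gamma>) has_real_derivative
          2 * \<alpha> / (1 - \<alpha>) * \<phi> * (2 * k) * N powr \<gamma>) (at k)"
    by (intro DERIV_cmult_right DERIV_cmult DERIV_pow[of 2, simplified])
  then show ?thesis
    unfolding estar_def by (rule DERIV_cong) (use assms in \<open>simp add: power2_eq_square ac_simps\<close>)
qed

lemma has_real_derivative_estar_N:
  assumes "0 < N"
  shows "((\<lambda>y. estar \<alpha> \<phi> \<gamma> k y) has_real_derivative \<gamma> * estar \<alpha> \<phi> \<gamma> k N / N) (at N)"
proof -
  have "((\<lambda>y. 2 * \<alpha> / (1 - \<alpha>) * \<phi> * k^2 * y powr \<gamma>) has_real_derivative
          2 * \<alpha> / (1 - \<alpha>) * \<phi> * k^2 * (\<gamma> * N powr (\<gamma> - 1))) (at N)"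
    using assms by (intro DERIV_cmult has_real_derivative_powr)
  then show ?thesis
    unfolding estar_def by (rule DERIV_cong) (use assms in \<open>simp add: field_simps powr_diff\<close>)
qed

lemma has_real_derivative_nstar_k:
  assumes "k \<noteq> 0" "0 < N" "\<phi> \<noteq> 0"
  shows "((\<lambda>x. nstar \<alpha> \<phi> \<gamma> x N) has_real_derivative - nstar \<alpha> \<phi> \<gamma> k N / k) (at k)"
  unfolding nstar_def using assms
  by (auto intro!: derivative_eq_intros simp: power2_eq_square field_simps)

lemma has_real_derivative_nstar_N:
  assumes "0 < N" "k \<noteq> 0" "\<phi> \<noteq> 0"
  shows "((\<lambda>y. nstar \<alpha> \<phi> \<gamma> k y) has_real_derivative - \<gamma> * nstar \<alpha> \<phi> \<gamma> k N / N) (at N)"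
  unfolding nstar_def using assms
  by (auto intro!: derivative_eq_intros simp: powr_diff field_simps)

lemma has_real_derivative_FC_k_k:
  assumes "0 < \<alpha>" "\<alpha> < 1" "0 < \<phi>" "0 < k" "0 < N"
  shows "((\<lambda>x. FC_k A \<alpha> \<beta> \<phi> \<gamma> x N) has_real_derivative
           (2 * \<alpha> + \<beta>) * FC_k A \<alpha> \<beta> \<phi> \<gamma> k N / k) (at k)"
proof -
  let ?e = "estar \<alpha> \<phi> \<gamma> k N"
  have "0 < ?e" using assms by (simp add: estar_pos)
  have "((\<lambda>x. estar \<alpha> \<phi> \<gamma> x N powr \<alpha>) has_real_derivative \<alpha> * ?e powr (\<alpha> - 1) * (2 * ?e / k)) (at k)"
    using DERIV_fun_powr[OF has_real_derivative_estar_k \<open>0 < ?e\<close>, of \<alpha>] assms by simp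
  from DERIV_mult[OF DERIV_cmult[OF this, of A] has_real_derivative_powr[OF \<open>0 < k\<close>, of \<beta>]]
  show ?thesis
    unfolding FC_k_def by (rule DERIV_cong) (use assms \<open>0 < ?e\<close> in \<open>simp add: powr_diff field_simps\<close>)
qed

lemma has_real_derivative_FC_k_N:
  assumes "0 < \<alpha>" "\<alpha> < 1" "0 < \<phi>" "0 < k" "0 < N"
  shows "((\<lambda>y. FC_k A \<alpha> \<beta> \<phi> \<gamma> k y) has_real_derivative
           \<alpha> * \<gamma> * FC_k A \<alpha> \<beta> \<phi> \<gamma> k N / N) (at N)"
proof -
  let ?e = "estar \<alpha> \<phi> \<gamma> k N"
  have "0 < ?e" using assms by (simp add: estar_pos)
  have "((\<lambda>y. estar \<alpha> \<phi> \<gamma> k y powr \<alpha>) has_real_derivative \<alpha> * ?e powr (\<alpha> - 1) * (\<gamma> * ?e / N)) (at N)"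
    using DERIV_fun_powr[OF has_real_derivative_estar_N \<open>0 < ?e\<close>, of \<alpha>] assms by simp
  from DERIV_cmult_right[OF DERIV_cmult[OF this, of A], of "k powr \<beta>"]
  show ?thesis
    unfolding FC_k_def by (rule DERIV_cong) (use \<open>0 < ?e\<close> in \<open>simp add: powr_diff field_simps\<close>)
qed

lemma has_real_derivative_FC_N_k:
  assumes "0 < \<phi>" "0 < k" "0 < N"
  shows "((\<lambda>x. FC_N \<alpha> \<phi> \<gamma> x N) has_real_derivative - FC_N \<alpha> \<phi> \<gamma> k N / k) (at k)"
  unfolding FC_N_def using assms
  by (intro DERIV_cong[OF DERIV_cmult_right[OF has_real_derivative_nstar_k]]) auto

lemma has_real_derivative_FC_N_N:
  assumes "0 < \<phi>" "0 < k" "0 < N"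
  shows "((\<lambda>y. FC_N \<alpha> \<phi> \<gamma> k y) has_real_derivative (1 - \<gamma>) * FC_N \<alpha> \<phi> \<gamma> k N / N) (at N)"
  unfolding FC_N_def using assms
  by (intro DERIV_cong[OF DERIV_mult[OF has_real_derivative_nstar_N DERIV_ident]])
     (auto simp: field_simps)

lemma jac_FC_eq:
  assumes "0 < \<alpha>" "\<alpha> < 1" "0 < \<phi>" "0 < k" "0 < N"
  shows "jac_FC A \<alpha> \<beta> \<phi> \<gamma> k N =
    vector [vector [(2 * \<alpha> + \<beta>) * FC_k A \<alpha> \<beta> \<phi> \<gamma> k N / k, \<alpha> * \<gamma> * FC_k A \<alpha> \<beta> \<phi> \<gamma> k N / N],
            vector [- FC_N \<alpha> \<phi> \<gamma> k N / k, (1 - \<gamma>) * FC_N \<alpha> \<phi> \<gamma> k N / N]]"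
  unfolding jac_FC_def
  using DERIV_imp_deriv[OF has_real_derivative_FC_k_k[OF assms]]
    DERIV_imp_deriv[OF has_real_derivative_FC_k_N[OF assms]]
    DERIV_imp_deriv[OF has_real_derivative_FC_N_k[OF assms(3-5)]]
    DERIV_imp_deriv[OF has_real_derivative_FC_N_N[OF assms(3-5)]]
  by simp

lemma jac_FC_at_fixpoint:
  assumes "0 < \<alpha>" "\<alpha> < 1" "0 < \<phi>" "0 < k" "0 < N"
    and "FC A \<alpha> \<beta> \<phi> \<gamma> (k, N) = (k, N)"
  shows "jac_FC A \<alpha> \<beta> \<phi> \<gamma> k N = vector [vector [2 * \<alpha> + \<beta>, \<alpha> * \<gamma> * k / N], vector [- N / k, 1 - \<gamma>]]"
  using assms by (simp add: jac_FC_eq FC_def)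

text \<open>The four factors on the left are the paper's E_k, E_N, D_k and D_N.\<close>

lemma partials_at_fixpoint:
  assumes "0 < \<alpha>" "\<alpha> < 1" "0 < \<phi>" "0 < k" "0 < N"
    and fixpt: "FC A \<alpha> \<beta> \<phi> \<gamma> (k, N) = (k, N)"
  defines "c \<equiv> A * \<alpha> * estar \<alpha> \<phi> \<gamma> k N powr (\<alpha> - 1) * k powr \<beta>"
  shows "c * (4 * \<alpha> * \<phi> / (1 - \<alpha>) * k * N powr \<gamma>) = 2 * \<alpha>"
    and "c * (2 * \<alpha> * \<gamma> * \<phi> / (1 - \<alpha>) * k^2 * N powr (\<gamma> - 1)) = \<alpha> * \<gamma> * k / N"
    and "- (1 - \<alpha>) / (4 * \<phi> * k^2 * N powr \<gamma>) = - 1 / k"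
    and "- (\<gamma> * (1 - \<alpha>)) / (4 * \<phi> * k * N powr (\<gamma> + 1)) = - \<gamma> / N"
proof -
  let ?e = "estar \<alpha> \<phi> \<gamma> k N"
  have "0 < ?e" using assms by (simp add: estar_pos)
  have "A * ?e powr \<alpha> * k powr \<beta> = k"
    using fixpt unfolding FC_def FC_k_def by simp
  moreover have "c = \<alpha> * (A * ?e powr \<alpha> * k powr \<beta>) / ?e"
    unfolding c_def using \<open>0 < ?e\<close> by (simp add: powr_diff)
  ultimately have "c = \<alpha> * k / ?e" by simp
  moreover have "4 * \<alpha> * \<phi> / (1 - \<alpha>) * k * N powr \<gamma> = 2 * ?e / k"
    and "2 * \<alpha> * \<gamma> * \<phi> / (1 - \<alpha>) * k^2 * N powr (\<gamma> - 1) = \<gamma> * ?e / N"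
    unfolding estar_def using assms by (simp_all add: field_simps power2_eq_square powr_diff)
  ultimately show "c * (4 * \<alpha> * \<phi> / (1 - \<alpha>) * k * N powr \<gamma>) = 2 * \<alpha>"
    and "c * (2 * \<alpha> * \<gamma> * \<phi> / (1 - \<alpha>) * k^2 * N powr (\<gamma> - 1)) = \<alpha> * \<gamma> * k / N"
    using \<open>0 < ?e\<close> \<open>0 < k\<close> by simp_all
  have "nstar \<alpha> \<phi> \<gamma> k N = 1"
    using fixpt \<open>0 < N\<close> unfolding FC_def FC_N_def by simp
  then have fertility: "4 * \<phi> * k * N powr \<gamma> = 1 - \<alpha>"
    using assms unfolding nstar_def by (simp add: field_simps)
  show "- (1 - \<alpha>) / (4 * \<phi> * k^2 * N powr \<gamma>) = - 1 / k"
    and "- (\<gamma> * (1 - \<alpha>)) / (4 * \<phi> * k * N powr (\<gamma> + 1)) = - \<gamma> / N"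
    unfolding fertility[symmetric] using assms by (simp_all add: field_simps power2_eq_square powr_add)
qed

lemma eigenvalue2_vector_iff:
  "eigenvalue2 (vector [vector [a, b], vector [c, d]]) z \<longleftrightarrow>
     z\<^sup>2 - of_real (a + d) * z + of_real (a * d - b * c) = 0"
  unfolding eigenvalue2_def by (simp add: power2_eq_square algebra_simps)

lemma real_quadratic_root_in_unit_interval:
  fixes T D x :: real
  assumes "D < 1" "\<bar>T\<bar> < 1 + D" and root: "x\<^sup>2 - T * x + D = 0"
  shows "\<bar>x\<bar> < 1"
proof -
  have "D = x * (T - x)" using root by (simp add: algebra_simps power2_eq_square)
  have at_1: "0 < (1 - x) * (1 - (T - x))" and at_minus_1: "0 < (1 + x) * (1 + (T - x))"
    using assms \<open>D = x * (T - x)\<close> by (auto simp: algebra_simps)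
  have "x < 1"
  proof (rule ccontr)
    assume "\<not> x < 1"
    with at_1 have "1 < x" "1 < T - x" by (auto simp: zero_less_mult_iff)
    then have "1 < x * (T - x)" by (rule less_1_mult)
    with \<open>D < 1\<close> \<open>D = x * (T - x)\<close> show False by simp
  qed
  moreover have "-1 < x"
  proof (rule ccontr)
    assume "\<not> -1 < x"
    with at_minus_1 have "1 < -x" "1 < -(T - x)" by (auto simp: zero_less_mult_iff)
    then have "1 < (-x) * (-(T - x))" by (rule less_1_mult)
    with \<open>D < 1\<close> \<open>D = x * (T - x)\<close> show False by simp
  qed
  ultimately show ?thesis by simp
qed

lemma quadratic_root_in_unit_disc:
  fixes T D :: real and z :: complex
  assumes "D < 1" "\<bar>T\<bar> < 1 + D" and root: "z\<^sup>2 - of_real T * z + of_real D = 0"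
  shows "cmod z < 1"
proof (cases "Im z = 0")
  case True
  then have "(Re z)\<^sup>2 - T * Re z + D = 0"
    using arg_cong[OF root, of Re] by (simp add: power2_eq_square)
  with assms have "\<bar>Re z\<bar> < 1" by (intro real_quadratic_root_in_unit_interval)
  with True show ?thesis by (simp add: cmod_eq_Re)
next
  case False
  have "(2 * Re z - T) * Im z = 0"
    using arg_cong[OF root, of Im] by (simp add: power2_eq_square algebra_simps)
  with False have "T = 2 * Re z" by simp
  moreover have "(Re z)\<^sup>2 - (Im z)\<^sup>2 - T * Re z + D = 0"
    using arg_cong[OF root, of Re] by (simp add: power2_eq_square)
  ultimately have "(cmod z)\<^sup>2 = D"
    unfolding cmod_power2 by (simp add: power2_eq_square algebra_simps)
  with \<open>D < 1\<close> have "(cmod z)\<^sup>2 < 1\<^sup>2" by simp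
  then show ?thesis by (rule power_less_imp_less_base) simp
qed

theorem proposition4:
  fixes A \<phi> \<gamma> \<alpha> \<beta> kb Nb :: real
  assumes A_pos: "A > 0" and phi_pos: "\<phi> > 0"
    and gam: "0 < \<gamma>" "\<gamma> < 1"
    and alpha_pos: "\<alpha> > 0" and beta_pos: "\<beta> > 0" and ab: "\<alpha> + \<beta> < 1"
    and kb_pos: "kb > 0" and Nb_pos: "Nb > 0"
    and fixpt: "FC A \<alpha> \<beta> \<phi> \<gamma> (kb, Nb) = (kb, Nb)"
  defines "eb \<equiv> estar \<alpha> \<phi> \<gamma> kb Nb"
    and "Ek \<equiv> 4 * \<alpha> * \<phi> / (1 - \<alpha>) * kb * Nb powr \<gamma>"
    and "EN \<equiv> 2 * \<alpha> * \<gamma> * \<phi> / (1 - \<alpha>) * kb^2 * Nb powr (\<gamma> - 1)"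
    and "Dk \<equiv> - (1 - \<alpha>) / (4 * \<phi> * kb^2 * Nb powr \<gamma>)"
    and "DN \<equiv> - (\<gamma> * (1 - \<alpha>)) / (4 * \<phi> * kb * Nb powr (\<gamma> + 1))"
  assumes cond1: "1 - (\<alpha> * eb powr (\<alpha> - 1) * EN * kb powr \<beta> * Dk * Nb)
                      / (\<alpha> * eb powr (\<alpha> - 1) * Ek * kb powr \<beta> + \<beta> / A)
                    - 1 / (A * \<alpha> * eb powr (\<alpha> - 1) * Ek * kb powr \<beta> + \<beta>)
                  < - DN * Nb"
    and cond2: "- DN * Nb < 1 - (A * \<alpha> * eb powr (\<alpha> - 1) * EN * kb powr \<beta> * Dk * Nb)
                      / (1 + A * \<alpha> * eb powr (\<alpha> - 1) * Ek * kb powr \<beta> + \<beta>)"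
    and cond3: "A * \<alpha> * eb powr (\<alpha> - 1) * Ek * kb powr \<beta> + \<beta> > 1"
  shows "\<forall>z. eigenvalue2 (jac_FC A \<alpha> \<beta> \<phi> \<gamma> kb Nb) z \<longrightarrow> cmod z < 1"
proof -
  have "\<alpha> < 1" using ab beta_pos by linarith
  define c where "c = A * \<alpha> * eb powr (\<alpha> - 1) * kb powr \<beta>"
  note partials = partials_at_fixpoint[OF alpha_pos \<open>\<alpha> < 1\<close> phi_pos kb_pos Nb_pos fixpt,
      folded eb_def, folded c_def Ek_def EN_def Dk_def DN_def]
  have "1 - c * EN * (Dk * Nb) / (c * Ek + \<beta>) - 1 / (c * Ek + \<beta>) < - DN * Nb"
  proof -
    have "(\<alpha> * eb powr (\<alpha> - 1) * EN * kb powr \<beta> * Dk * Nb) / (\<alpha> * eb powr (\<alpha> - 1) * Ek * kb powr \<beta> + \<beta> / A)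
        = c * EN * (Dk * Nb) / (c * Ek + \<beta>)"
      unfolding c_def using A_pos by (simp add: field_simps)
    with cond1 show ?thesis unfolding c_def by (simp add: ac_simps)
  qed
  then have "(2 * \<alpha> + \<beta> + \<alpha> * \<gamma> - 1) / (2 * \<alpha> + \<beta>) < \<gamma>"
    using partials alpha_pos beta_pos kb_pos Nb_pos by (simp add: diff_divide_distrib add_divide_distrib)
  then have det_lt_1: "(2 * \<alpha> + \<beta>) * (1 - \<gamma>) + \<alpha> * \<gamma> < 1"
    using alpha_pos beta_pos by (simp add: pos_divide_less_eq algebra_simps)
  have "\<bar>2 * \<alpha> + \<beta> + (1 - \<gamma>)\<bar> < 1 + ((2 * \<alpha> + \<beta>) * (1 - \<gamma>) + \<alpha> * \<gamma>)"
    using gam alpha_pos beta_pos mult_strict_left_mono[OF ab gam(1)] by (simp add: algebra_simps)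
  note unit_disc = quadratic_root_in_unit_disc[OF det_lt_1 this]
  show ?thesis
    using jac_FC_at_fixpoint[OF alpha_pos \<open>\<alpha> < 1\<close> phi_pos kb_pos Nb_pos fixpt] kb_pos Nb_pos
    by (auto simp: eigenvalue2_vector_iff intro!: unit_disc)
qed

end
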